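(* Consider the network $\Sigma$ described in the context. The following assertions are equivalent: (i) $\Sigma$ is well-posed. (ii) $\Sigma$ is well-posed and there exist $C>0$ and $\kappa\in\mathcal{K}_\infty$ such that for all $x\in X$ and $u\in U$, $|f(x,u)|_\infty \le C+\kappa(|x|_\infty)+\kappa(|u|_\infty)$. (iii) There exist $C>0$ and $\kappa\in\mathcal{K}_\infty$ such that for all $i\in\mathbb{N}$ and all $x_i\in\mathbb{R}^{n_i}$, $\bar x_i\in X(I_i)$, $u_i\in\mathbb{R}^{p_i}$, $|f_i(x_i,\bar x_i,u_i)| \le C+\kappa(|x_i|)+\kappa(|\bar x_i|)+\kappa(|u_i|)$.
   Context: Let $\mathbb{N}=\{1,2,\dots\}$. For each $i\in\mathbb{N}$ fix positive integers $n_i,p_i$, norms $|\cdot|$ on $\mathbb{R}^{n_i}$ and on $\mathbb{R}^{p_i}$, and a finite set $I_i\subset\mathbb{N}\setminus\{i\}$, such that for every $i\in\mathbb{N}$ the set $\{j\in\mathbb{N}: i\in I_j\}$ is finite. Let $X(I_i):=\prod_{j\in I_i}\mathbb{R}^{n_j}$ with norm $|\bar x_i|:=\sup_{j\in I_i}|x_j|$ for $\bar x_i=(x_j)_{j\in I_i}$. For each $i$ let $f_i:\mathbb{R}^{n_i}\times X(I_i)\times\mathbb{R}^{p_i}\to\mathbb{R}^{n_i}$ be continuous (subsystem $\Sigma_i: x_i^+=f_i(x_i,\bar x_i,u_i)$). Let $X:=\{x=(x_i)_{i\in\mathbb{N}}: x_i\in\mathbb{R}^{n_i},\ \sup_i|x_i|<\infty\}$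 with norm $|x|_\infty:=\sup_i|x_i|$, and $U:=\{u=(u_i)_{i\in\mathbb{N}}: u_i\in\mathbb{R}^{p_i},\ \sup_i|u_i|<\infty\}$ with norm $|u|_\infty:=\sup_i|u_i|$. Let $X_E:=\prod_{i\in\mathbb{N}}\mathbb{R}^{n_i}$ and define $f:X_E\times U\to X_E$ by $f(x,u)_i:=f_i(x_i,(x_j)_{j\in I_i},u_i)$. The network $\Sigma$ is $x^+=f(x,u)$. $\Sigma$ is called well-posed if $f(x,u)\in X$ for all $x\in X$, $u\in U$. $\mathcal{K}_\infty$ denotes the continuous, strictly increasing, unbounded functions $\gamma:[0,\infty)\to[0,\infty)$ with $\gamma(0)=0$. *)

theory Defs
  imports "HOL-Analysis.Analysis"
begin

text \<open>R^n is modelled as the functions nat => real vanishing outside the indices below n.\<close>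
definition Vsp :: "nat \<Rightarrow> (nat \<Rightarrow> real) set" where
  "Vsp n = {v. \<forall>k\<ge>n. v k = 0}"

definition is_norm_on :: "nat \<Rightarrow> ((nat \<Rightarrow> real) \<Rightarrow> real) \<Rightarrow> bool" where
  "is_norm_on n N \<longleftrightarrow>
     (\<forall>v\<in>Vsp n. 0 \<le> N v \<and> (N v = 0 \<longleftrightarrow> v = (\<lambda>_. 0))) \<and>
     (\<forall>c v. v \<in> Vsp n \<longrightarrow> N (\<lambda>k. c * v k) = \<bar>c\<bar> * N v) \<and>
     (\<forall>v\<in>Vsp n. \<forall>w\<in>Vsp n. N (\<lambda>k. v k + w k) \<le> N v + N w)"

text \<open>X(I): families (y_j) indexed by j in I, y_j in R^(n_j); normalised to 0 outside I.\<close>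
definition Xbar :: "(nat \<Rightarrow> nat) \<Rightarrow> nat set \<Rightarrow> (nat \<Rightarrow> nat \<Rightarrow> real) set" where
  "Xbar n I = {y. (\<forall>j\<in>I. y j \<in> Vsp (n j)) \<and> (\<forall>j. j \<notin> I \<longrightarrow> y j = (\<lambda>_. 0))}"

text \<open>sup norm on X(I) (I finite; the empty supremum is 0).\<close>
definition barnorm :: "(nat \<Rightarrow> (nat \<Rightarrow> real) \<Rightarrow> real) \<Rightarrow> nat set \<Rightarrow> (nat \<Rightarrow> nat \<Rightarrow> real) \<Rightarrow> real" where
  "barnorm N I y = Max (insert 0 ((\<lambda>j. N j (y j)) ` I))"

definition restr :: "nat set \<Rightarrow> (nat \<Rightarrow> nat \<Rightarrow> real) \<Rightarrow> (nat \<Rightarrow> nat \<Rightarrow> real)" where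
  "restr I x = (\<lambda>j. if j \<in> I then x j else (\<lambda>_. 0))"

definition seqsp :: "(nat \<Rightarrow> nat) \<Rightarrow> (nat \<Rightarrow> (nat \<Rightarrow> real) \<Rightarrow> real) \<Rightarrow> (nat \<Rightarrow> nat \<Rightarrow> real) set" where
  "seqsp n N = {x. (\<forall>i. x i \<in> Vsp (n i)) \<and> (\<exists>B. \<forall>i. N i (x i) \<le> B)}"

definition supnorm :: "(nat \<Rightarrow> (nat \<Rightarrow> real) \<Rightarrow> real) \<Rightarrow> (nat \<Rightarrow> nat \<Rightarrow> real) \<Rightarrow> real" where
  "supnorm N x = (SUP i. N i (x i))"

definition netf ::
  "(nat \<Rightarrow> (nat \<Rightarrow> real) \<Rightarrow> (nat \<Rightarrow> nat \<Rightarrow> real) \<Rightarrow> (nat \<Rightarrow> real) \<Rightarrow> (nat \<Rightarrow> real))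
   \<Rightarrow> (nat \<Rightarrow> nat set) \<Rightarrow> (nat \<Rightarrow> nat \<Rightarrow> real) \<Rightarrow> (nat \<Rightarrow> nat \<Rightarrow> real) \<Rightarrow> (nat \<Rightarrow> nat \<Rightarrow> real)" where
  "netf fs I x u = (\<lambda>i. fs i (x i) (restr (I i) x) (u i))"

definition well_posed where
  "well_posed n p nx nu I fs \<longleftrightarrow>
     (\<forall>x\<in>seqsp n nx. \<forall>u\<in>seqsp p nu. netf fs I x u \<in> seqsp n nx)"

definition sub_continuous where
  "sub_continuous n p nx nu I i g \<longleftrightarrow>
     (\<forall>a\<in>Vsp (n i). \<forall>y\<in>Xbar n (I i). \<forall>w\<in>Vsp (p i). \<forall>\<epsilon>>0. \<exists>\<delta>>0.
        \<forall>a'\<in>Vsp (n i). \<forall>y'\<in>Xbar n (I i). \<forall>w'\<in>Vsp (p i).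
          nx i (a' - a) < \<delta> \<and> barnorm nx (I i) (y' - y) < \<delta> \<and> nu i (w' - w) < \<delta>
          \<longrightarrow> nx i (g a' y' w' - g a y w) < \<epsilon>)"

definition Kinf :: "(real \<Rightarrow> real) \<Rightarrow> bool" where
  "Kinf \<gamma> \<longleftrightarrow> continuous_on {0..} \<gamma> \<and> strict_mono_on {0..} \<gamma> \<and> \<gamma> 0 = 0 \<and>
     (\<forall>M. \<exists>r\<ge>0. \<gamma> r > M)"

end

theory Submission
  imports Defs
begin

(* Sufficiency of the growth bound on the subsystems is a direct estimate.  For necessity,
   continuity and finite dimensionality make each f_i bounded on bounded sets.  These bounds are
   uniform in i: otherwise, since every node influences only finitely many subsystems, one can
   pick infinitely many subsystems i whose sets {i} union I_i are pairwise disjoint, with arguments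
   of norm at most r on which f_i is arbitrarily large, and glue these arguments into one bounded
   state and input whose image under f is unbounded, contradicting well-posedness.  A K_infinity
   function dominating the uniform bounds on the balls of radius 1, 2, 3, ... is then obtained by
   piecewise linear interpolation. *)

section \<open>Finite-dimensional normed spaces\<close>

lemma Vsp_zero: "(\<lambda>_. 0) \<in> Vsp n"
  by (simp add: Vsp_def)

lemma Vsp_diff: "v \<in> Vsp n \<Longrightarrow> w \<in> Vsp n \<Longrightarrow> v - w \<in> Vsp n"
  by (simp add: Vsp_def)

lemma Vsp_scale: "v \<in> Vsp n \<Longrightarrow> (\<lambda>k. c * v k) \<in> Vsp n"
  by (simp add: Vsp_def)

lemma is_norm_on_zero: "is_norm_on n N \<Longrightarrow> N (\<lambda>_. 0) = 0"
  unfolding is_norm_on_def using Vsp_zero by blast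

lemma is_norm_on_nonneg: "is_norm_on n N \<Longrightarrow> v \<in> Vsp n \<Longrightarrow> 0 \<le> N v"
  unfolding is_norm_on_def by blast

lemma is_norm_on_eq_0: "is_norm_on n N \<Longrightarrow> v \<in> Vsp n \<Longrightarrow> N v = 0 \<longleftrightarrow> v = (\<lambda>_. 0)"
  unfolding is_norm_on_def by blast

lemma is_norm_on_triangle:
  "is_norm_on n N \<Longrightarrow> v \<in> Vsp n \<Longrightarrow> w \<in> Vsp n \<Longrightarrow> N (\<lambda>k. v k + w k) \<le> N v + N w"
  unfolding is_norm_on_def by blast

lemma is_norm_on_homogeneous: "is_norm_on n N \<Longrightarrow> v \<in> Vsp n \<Longrightarrow> N (\<lambda>k. c * v k) = \<bar>c\<bar> * N v"
  unfolding is_norm_on_def by blast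

lemma is_norm_on_le_diff:
  assumes "is_norm_on n N" "v \<in> Vsp n" "w \<in> Vsp n"
  shows "N v \<le> N (v - w) + N w"
  using is_norm_on_triangle[OF assms(1) Vsp_diff[OF assms(2,3)] assms(3)] by simp

lemma is_norm_on_minus_commute:
  assumes "is_norm_on n N" "v \<in> Vsp n" "w \<in> Vsp n"
  shows "N (v - w) = N (w - v)"
proof -
  have "w - v = (\<lambda>k. (-1) * (v - w) k)" by auto
  then show ?thesis using is_norm_on_homogeneous[OF assms(1) Vsp_diff[OF assms(2,3)], of "-1"] by simp
qed

definition unit_vec :: "nat \<Rightarrow> nat \<Rightarrow> real" where
  "unit_vec k = (\<lambda>t. if t = k then 1 else 0)"

lemma is_norm_on_le_coordinate_sum:
  assumes N: "is_norm_on n N" and v: "v \<in> Vsp n"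
  shows "N v \<le> (\<Sum>k<n. \<bar>v k\<bar> * N (unit_vec k))"
proof -
  have "N (\<lambda>t. if t < m then v t else 0) \<le> (\<Sum>k<m. \<bar>v k\<bar> * N (unit_vec k))" if "m \<le> n" for m
    using that
  proof (induction m)
    case 0
    then show ?case using is_norm_on_zero[OF N] by simp
  next
    case (Suc m)
    let ?v = "\<lambda>t. if t < m then v t else 0"
    have e: "unit_vec m \<in> Vsp n" using Suc.prems by (auto simp: Vsp_def unit_vec_def)
    have "(\<lambda>t. if t < Suc m then v t else 0) = (\<lambda>t. ?v t + v m * unit_vec m t)"
      by (auto simp: unit_vec_def fun_eq_iff less_Suc_eq)
    moreover have "N (\<lambda>t. ?v t + v m * unit_vec m t) \<le> N ?v + \<bar>v m\<bar> * N (unit_vec m)"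
      using is_norm_on_triangle[OF N _ Vsp_scale[OF e]] is_norm_on_homogeneous[OF N e] v
      by (simp add: Vsp_def)
    ultimately show ?case using Suc by simp
  qed
  moreover have "(\<lambda>t. if t < n then v t else 0) = v" using v by (auto simp: Vsp_def)
  ultimately show ?thesis by force
qed

lemma is_norm_on_tendsto_coordinatewise:
  assumes N: "is_norm_on n N" and V: "\<And>m. V m \<in> Vsp n" and v: "v \<in> Vsp n"
    and lim: "\<And>k. k < n \<Longrightarrow> (\<lambda>m. V m k) \<longlonglongrightarrow> v k"
  shows "(\<lambda>m. N (V m - v)) \<longlonglongrightarrow> 0"
proof (rule Lim_null_comparison)
  show "\<forall>\<^sub>F m in sequentially. norm (N (V m - v)) \<le> (\<Sum>k<n. \<bar>V m k - v k\<bar> * N (unit_vec k))"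
    using is_norm_on_le_coordinate_sum[OF N Vsp_diff[OF V v]] is_norm_on_nonneg[OF N Vsp_diff[OF V v]]
    by simp
  have "(\<lambda>m. \<bar>V m k - v k\<bar> * N (unit_vec k)) \<longlonglongrightarrow> 0" if "k \<in> {..<n}" for k
    using that by (intro tendsto_mult_left_zero tendsto_rabs_zero LIM_zero lim) simp
  then show "(\<lambda>m. \<Sum>k<n. \<bar>V m k - v k\<bar> * N (unit_vec k)) \<longlonglongrightarrow> 0"
    by (rule tendsto_null_sum)
qed

lemma is_norm_on_coordinatewise_limit_eq_0:
  assumes N: "is_norm_on n N" and W: "\<And>m. W m \<in> Vsp n" and w: "w \<in> Vsp n"
    and lim: "\<And>k. k < n \<Longrightarrow> (\<lambda>m. W m k) \<longlonglongrightarrow> w k"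
    and null: "(\<lambda>m. N (W m)) \<longlonglongrightarrow> 0"
  shows "w = (\<lambda>_. 0)"
proof -
  have "(\<lambda>m. N (W m - w) + N (W m)) \<longlonglongrightarrow> 0"
    using tendsto_add[OF is_norm_on_tendsto_coordinatewise[OF N W w lim] null] by simp
  moreover have "N w \<le> N (W m - w) + N (W m)" for m
    using is_norm_on_le_diff[OF N w W] is_norm_on_minus_commute[OF N w W] by simp
  ultimately have "N w \<le> 0" by (intro LIMSEQ_le_const) auto
  then show ?thesis using is_norm_on_nonneg[OF N w] is_norm_on_eq_0[OF N w] by simp
qed

lemma finite_bounded_seqs_convergent_subseq:
  fixes X :: "nat \<Rightarrow> 'a \<Rightarrow> real"
  assumes "finite S" and "\<And>t. t \<in> S \<Longrightarrow> bounded (range (\<lambda>m. X m t))"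
  shows "\<exists>\<sigma>. strict_mono \<sigma> \<and> (\<forall>t\<in>S. convergent (\<lambda>m. X (\<sigma> m) t))"
  using assms
proof (induction S rule: finite_induct)
  case empty
  show ?case using strict_mono_id by blast
next
  case (insert t S)
  then obtain \<sigma> where \<sigma>: "strict_mono \<sigma>" "\<forall>t\<in>S. convergent (\<lambda>m. X (\<sigma> m) t)" by auto
  have "bounded (range (\<lambda>m. X (\<sigma> m) t))"
    using insert.prems by (rule bounded_subset) auto
  then obtain l \<tau> where \<tau>: "strict_mono \<tau>" "((\<lambda>m. X (\<sigma> m) t) \<circ> \<tau>) \<longlonglongrightarrow> l"
    using bounded_imp_convergent_subsequence by blast
  have "convergent (\<lambda>m. X (\<sigma> (\<tau> m)) t')" if t': "t' \<in> insert t S" for t'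
  proof (cases "t' = t")
    case True
    then show ?thesis using \<tau>(2) by (auto simp: convergent_def o_def)
  next
    case False
    then obtain L where "(\<lambda>m. X (\<sigma> m) t') \<longlonglongrightarrow> L" using t' \<sigma>(2) by (auto simp: convergent_def)
    from LIMSEQ_subseq_LIMSEQ[OF this \<tau>(1)] show ?thesis by (auto simp: convergent_def o_def)
  qed
  then show ?case using strict_mono_o[OF \<sigma>(1) \<tau>(1)] by (auto simp: o_def)
qed

lemma is_norm_on_l1_sphere_lower_bound:
  assumes N: "is_norm_on n N"
  shows "\<exists>c>0. \<forall>v\<in>Vsp n. (\<Sum>k<n. \<bar>v k\<bar>) = 1 \<longrightarrow> c \<le> N v"
proof (rule ccontr)
  assume "\<not> ?thesis"
  then have "\<not> (\<forall>v\<in>Vsp n. (\<Sum>k<n. \<bar>v k\<bar>) = 1 \<longrightarrow> inverse (real (Suc m)) \<le> N v)" for m :: nat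
    by (metis inverse_positive_iff_positive of_nat_0_less_iff zero_less_Suc)
  then have "\<exists>v\<in>Vsp n. (\<Sum>k<n. \<bar>v k\<bar>) = 1 \<and> N v < inverse (real (Suc m))" for m :: nat
    by (auto simp: not_le)
  then obtain W where W: "\<And>m. W m \<in> Vsp n" and W_sum: "\<And>m. (\<Sum>k<n. \<bar>W m k\<bar>) = 1"
    and W_small: "\<And>m. N (W m) < inverse (real (Suc m))"
    by metis
  have "N (W m) \<le> inverse (real (Suc m))" for m
    using W_small[of m] by simp
  then have W_null: "(\<lambda>m. N (W m)) \<longlonglongrightarrow> 0"
    using is_norm_on_nonneg[OF N W]
    by (intro Lim_null_comparison[OF _ LIMSEQ_inverse_real_of_nat]) auto
  have "\<bar>W m k\<bar> \<le> 1" for m k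
  proof (cases "k < n")
    case True
    then show ?thesis using W_sum[of m] member_le_sum[of k "{..<n}" "\<lambda>k. \<bar>W m k\<bar>"] by simp
  next
    case False
    then show ?thesis using W[of m] by (simp add: Vsp_def)
  qed
  then have "bounded (range (\<lambda>m. W m k))" for k
    by (auto simp: bounded_iff)
  then obtain \<sigma> where \<sigma>: "strict_mono \<sigma>" "\<forall>k\<in>{..<n}. convergent (\<lambda>m. W (\<sigma> m) k)"
    using finite_bounded_seqs_convergent_subseq[of "{..<n}" W] by blast
  define w where "w k = (if k < n then lim (\<lambda>m. W (\<sigma> m) k) else 0)" for k
  have w: "w \<in> Vsp n" by (simp add: Vsp_def w_def)
  have lim: "(\<lambda>m. W (\<sigma> m) k) \<longlonglongrightarrow> w k" if "k < n" for k
    using \<sigma>(2) that by (simp add: w_def convergent_LIMSEQ_iff)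
  have "(\<lambda>m. \<Sum>k<n. \<bar>W (\<sigma> m) k\<bar>) \<longlonglongrightarrow> (\<Sum>k<n. \<bar>w k\<bar>)"
    by (intro tendsto_intros lim) simp
  moreover have "(\<lambda>m. \<Sum>k<n. \<bar>W (\<sigma> m) k\<bar>) \<longlonglongrightarrow> 1"
    by (simp add: W_sum)
  ultimately have "(\<Sum>k<n. \<bar>w k\<bar>) = 1"
    by (rule LIMSEQ_unique)
  moreover have "w = (\<lambda>_. 0)"
    using is_norm_on_coordinatewise_limit_eq_0[OF N W w lim]
      LIMSEQ_subseq_LIMSEQ[OF W_null \<sigma>(1)] by (simp add: o_def)
  ultimately show False by simp
qed

lemma is_norm_on_coordinate_bound:
  assumes N: "is_norm_on n N"
  shows "\<exists>c>0. \<forall>v\<in>Vsp n. \<forall>k. \<bar>v k\<bar> \<le> c * N v"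
proof -
  obtain c where c: "c > 0" and sphere: "\<And>v. v \<in> Vsp n \<Longrightarrow> (\<Sum>k<n. \<bar>v k\<bar>) = 1 \<Longrightarrow> c \<le> N v"
    using is_norm_on_l1_sphere_lower_bound[OF N] by blast
  have "\<bar>v k\<bar> \<le> inverse c * N v" if v: "v \<in> Vsp n" for v k
  proof -
    define s where "s = (\<Sum>k<n. \<bar>v k\<bar>)"
    have coord: "\<bar>v k\<bar> \<le> s"
      using v unfolding s_def by (cases "k < n") (auto simp: Vsp_def sum_nonneg intro: member_le_sum)
    have Nv: "0 \<le> inverse c * N v"
      using c is_norm_on_nonneg[OF N v] by simp
    show ?thesis
    proof (cases "s = 0")
      case True
      then show ?thesis using coord Nv by linarith
    next
      case False
      then have s: "0 < s" using coord by (simp add: s_def sum_nonneg order_le_neq_trans)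
      have "c \<le> N (\<lambda>k. inverse s * v k)"
        using v s by (intro sphere Vsp_scale) (simp_all add: abs_mult s_def flip: sum_distrib_left)
      then have "c \<le> inverse s * N v"
        using is_norm_on_homogeneous[OF N v, of "inverse s"] s by simp
      then have "s \<le> inverse c * N v"
        using c s by (simp add: field_simps)
      then show ?thesis using coord by linarith
    qed
  qed
  then show ?thesis
    using c by (intro exI[of _ "inverse c"]) auto
qed

lemma norm_bounded_family_convergent_subseq:
  fixes d :: "'a \<Rightarrow> nat" and N :: "'a \<Rightarrow> (nat \<Rightarrow> real) \<Rightarrow> real"
    and V :: "nat \<Rightarrow> 'a \<Rightarrow> nat \<Rightarrow> real"
  assumes J: "finite J" and N: "\<And>j. j \<in> J \<Longrightarrow> is_norm_on (d j) (N j)"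
    and V: "\<And>m j. j \<in> J \<Longrightarrow> V m j \<in> Vsp (d j)"
    and bounded: "\<And>m j. j \<in> J \<Longrightarrow> N j (V m j) \<le> r"
  shows "\<exists>\<sigma> v. strict_mono \<sigma> \<and> (\<forall>j\<in>J. v j \<in> Vsp (d j) \<and> (\<lambda>m. N j (V (\<sigma> m) j - v j)) \<longlonglongrightarrow> 0)"
proof -
  have "bounded (range (\<lambda>m. V m j k))" if j: "j \<in> J" for j k
  proof -
    obtain c where c: "c > 0" and coord: "\<And>v k. v \<in> Vsp (d j) \<Longrightarrow> \<bar>v k\<bar> \<le> c * N j v"
      using is_norm_on_coordinate_bound[OF N[OF j]] by blast
    have "\<bar>V m j k\<bar> \<le> c * r" for m
    proof -
      have "\<bar>V m j k\<bar> \<le> c * N j (V m j)" by (rule coord[OF V[OF j]])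
      also have "\<dots> \<le> c * r" using bounded[OF j] c by (simp add: mult_left_mono)
      finally show ?thesis .
    qed
    then show ?thesis by (auto simp: bounded_iff)
  qed
  then obtain \<sigma> where \<sigma>: "strict_mono \<sigma>"
    "\<forall>(j, k)\<in>(SIGMA j:J. {..<d j}). convergent (\<lambda>m. V (\<sigma> m) j k)"
    using finite_bounded_seqs_convergent_subseq[of "SIGMA j:J. {..<d j}" "\<lambda>m (j, k). V m j k"] J
    by (auto simp: case_prod_beta)
  define v where "v j k = (if k < d j then lim (\<lambda>m. V (\<sigma> m) j k) else 0)" for j k
  have "v j \<in> Vsp (d j) \<and> (\<lambda>m. N j (V (\<sigma> m) j - v j)) \<longlonglongrightarrow> 0" if j: "j \<in> J" for j
  proof
    show v: "v j \<in> Vsp (d j)" by (simp add: Vsp_def v_def)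
    have "(\<lambda>m. V (\<sigma> m) j k) \<longlonglongrightarrow> v j k" if "k < d j" for k
      using \<sigma>(2) j that by (auto simp: v_def convergent_LIMSEQ_iff)
    then show "(\<lambda>m. N j (V (\<sigma> m) j - v j)) \<longlonglongrightarrow> 0"
      by (rule is_norm_on_tendsto_coordinatewise[OF N[OF j] V[OF j] v])
  qed
  then show ?thesis using \<sigma>(1) by blast
qed

section \<open>Boundedness of a single subsystem on bounded sets\<close>

lemma barnorm_nonneg: "finite I \<Longrightarrow> 0 \<le> barnorm N I y"
  unfolding barnorm_def by (intro Max_ge) auto

lemma barnorm_ge: "finite I \<Longrightarrow> j \<in> I \<Longrightarrow> N j (y j) \<le> barnorm N I y"
  unfolding barnorm_def by (intro Max_ge) auto

lemma barnorm_le: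
  assumes "finite I" "0 \<le> B" "\<And>j. j \<in> I \<Longrightarrow> N j (y j) \<le> B"
  shows "barnorm N I y \<le> B"
  unfolding barnorm_def using assms by (subst Max_le_iff) auto

lemma barnorm_tendsto_0:
  assumes I: "finite I" and nonneg: "\<And>j m. j \<in> I \<Longrightarrow> 0 \<le> N j (Y m j)"
    and lim: "\<And>j. j \<in> I \<Longrightarrow> (\<lambda>m. N j (Y m j)) \<longlonglongrightarrow> 0"
  shows "(\<lambda>m. barnorm N I (Y m)) \<longlonglongrightarrow> 0"
proof (rule Lim_null_comparison)
  have "barnorm N I (Y m) \<le> (\<Sum>j\<in>I. N j (Y m j))" for m
    using I nonneg by (intro barnorm_le sum_nonneg member_le_sum) auto
  then show "\<forall>\<^sub>F m in sequentially. norm (barnorm N I (Y m)) \<le> (\<Sum>j\<in>I. N j (Y m j))"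
    using barnorm_nonneg[OF I] by simp
  show "(\<lambda>m. \<Sum>j\<in>I. N j (Y m j)) \<longlonglongrightarrow> 0"
    using lim by (rule tendsto_null_sum)
qed

definition arg_ball ::
  "(nat \<Rightarrow> nat) \<Rightarrow> (nat \<Rightarrow> nat) \<Rightarrow> (nat \<Rightarrow> (nat \<Rightarrow> real) \<Rightarrow> real) \<Rightarrow> (nat \<Rightarrow> (nat \<Rightarrow> real) \<Rightarrow> real)
   \<Rightarrow> (nat \<Rightarrow> nat set) \<Rightarrow> nat \<Rightarrow> real \<Rightarrow> ((nat \<Rightarrow> real) \<times> (nat \<Rightarrow> nat \<Rightarrow> real) \<times> (nat \<Rightarrow> real)) set"
  where
  "arg_ball n p nx nu I i r = {(a, y, w). a \<in> Vsp (n i) \<and> y \<in> Xbar n (I i) \<and> w \<in> Vsp (p i) \<and>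
      nx i a \<le> r \<and> barnorm nx (I i) y \<le> r \<and> nu i w \<le> r}"

lemma arg_ball_convergent_subseq:
  fixes A W :: "nat \<Rightarrow> nat \<Rightarrow> real" and Y :: "nat \<Rightarrow> nat \<Rightarrow> nat \<Rightarrow> real"
  assumes nx: "\<And>j. is_norm_on (n j) (nx j)" and nu: "is_norm_on (p i) (nu i)"
    and fin: "finite (I i)" and ball: "\<And>m. (A m, Y m, W m) \<in> arg_ball n p nx nu I i r"
  shows "\<exists>\<sigma> a y w. strict_mono \<sigma> \<and> a \<in> Vsp (n i) \<and> y \<in> Xbar n (I i) \<and> w \<in> Vsp (p i) \<and>
    (\<lambda>m. nx i (A (\<sigma> m) - a)) \<longlonglongrightarrow> 0 \<and> (\<lambda>m. barnorm nx (I i) (Y (\<sigma> m) - y)) \<longlonglongrightarrow> 0 \<and>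
    (\<lambda>m. nu i (W (\<sigma> m) - w)) \<longlonglongrightarrow> 0"
proof -
  have A: "\<And>m. A m \<in> Vsp (n i)" and Y: "\<And>m. Y m \<in> Xbar n (I i)"
    and W: "\<And>m. W m \<in> Vsp (p i)" and A_le: "\<And>m. nx i (A m) \<le> r"
    and Y_le: "\<And>m. barnorm nx (I i) (Y m) \<le> r" and W_le: "\<And>m. nu i (W m) \<le> r"
    using ball by (simp_all add: arg_ball_def)
  \<comment> \<open>The components are indexed by None for w, Some None for a, and Some (Some j) for y j.\<close>
  define J where "J = insert None (insert (Some None) (Some ` Some ` I i))"
  define d where "d = case_option (p i) (case_option (n i) n)"
  define N where "N = case_option (nu i) (case_option (nx i) nx)"
  define V where "V m = case_option (W m) (case_option (A m) (Y m))" for m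
  have J: "finite J" by (simp add: J_def fin)
  have N_norm: "is_norm_on (d j) (N j)" if "j \<in> J" for j
    using that nx nu by (auto simp: J_def d_def N_def)
  have V_Vsp: "V m j \<in> Vsp (d j)" if "j \<in> J" for m j
    using that A W Y by (auto simp: J_def d_def V_def Xbar_def)
  have V_le: "N j (V m j) \<le> r" if "j \<in> J" for m j
  proof -
    have "nx k (Y m k) \<le> r" if "k \<in> I i" for k
      using barnorm_ge[OF fin that, of nx "Y m"] Y_le[of m] by linarith
    then show ?thesis using \<open>j \<in> J\<close> A_le W_le by (auto simp: J_def N_def V_def)
  qed
  have "\<exists>\<sigma> v. strict_mono \<sigma> \<and> (\<forall>j\<in>J. v j \<in> Vsp (d j) \<and> (\<lambda>m. N j (V (\<sigma> m) j - v j)) \<longlonglongrightarrow> 0)"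
    using J N_norm V_Vsp V_le by (rule norm_bounded_family_convergent_subseq)
  then obtain \<sigma> v where \<sigma>: "strict_mono \<sigma>"
    and v: "\<forall>j\<in>J. v j \<in> Vsp (d j) \<and> (\<lambda>m. N j (V (\<sigma> m) j - v j)) \<longlonglongrightarrow> 0"
    by blast
  define y where "y j = (if j \<in> I i then v (Some (Some j)) else (\<lambda>_. 0))" for j
  have y: "y \<in> Xbar n (I i)"
    using v by (auto simp: y_def Xbar_def J_def d_def)
  have "(\<lambda>m. barnorm nx (I i) (Y (\<sigma> m) - y)) \<longlonglongrightarrow> 0"
  proof (rule barnorm_tendsto_0[OF fin])
    show "0 \<le> nx j ((Y (\<sigma> m) - y) j)" if "j \<in> I i" for j m
      using is_norm_on_nonneg[OF nx Vsp_diff] Y y that by (simp add: Xbar_def)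
    show "(\<lambda>m. nx j ((Y (\<sigma> m) - y) j)) \<longlonglongrightarrow> 0" if "j \<in> I i" for j
      using v that by (simp add: y_def J_def N_def V_def)
  qed
  moreover have "v (Some None) \<in> Vsp (n i)" "v None \<in> Vsp (p i)"
    "(\<lambda>m. nx i (A (\<sigma> m) - v (Some None))) \<longlonglongrightarrow> 0" "(\<lambda>m. nu i (W (\<sigma> m) - v None)) \<longlonglongrightarrow> 0"
    using v by (auto simp: J_def d_def N_def V_def)
  ultimately show ?thesis
    using \<sigma> y by blast
qed

lemma sub_continuous_bounded_on_arg_ball:
  assumes nx: "\<And>j. is_norm_on (n j) (nx j)" and nu: "is_norm_on (p i) (nu i)"
    and fin: "finite (I i)"
    and maps: "\<And>a y w. a \<in> Vsp (n i) \<Longrightarrow> y \<in> Xbar n (I i) \<Longrightarrow> w \<in> Vsp (p i) \<Longrightarrow> g a y w \<in> Vsp (n i)"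
    and cont: "sub_continuous n p nx nu I i g"
  shows "bdd_above ((\<lambda>(a, y, w). nx i (g a y w)) ` arg_ball n p nx nu I i r)"
proof (rule ccontr)
  assume unbounded: "\<not> ?thesis"
  have "\<exists>a y w. (a, y, w) \<in> arg_ball n p nx nu I i r \<and> real m < nx i (g a y w)" for m :: nat
  proof -
    have "\<forall>M. \<exists>t\<in>arg_ball n p nx nu I i r. M < (case t of (a, y, w) \<Rightarrow> nx i (g a y w))"
      using unbounded by (auto simp: bdd_above_def not_le)
    then obtain t where "t \<in> arg_ball n p nx nu I i r" "real m < (case t of (a, y, w) \<Rightarrow> nx i (g a y w))"
      by blast
    then show ?thesis by (cases t) auto
  qed
  then obtain A Y W where ball: "\<And>m. (A m, Y m, W m) \<in> arg_ball n p nx nu I i r"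
    and big: "\<And>m. real m < nx i (g (A m) (Y m) (W m))"
    by metis
  have A: "\<And>m. A m \<in> Vsp (n i)" and Y: "\<And>m. Y m \<in> Xbar n (I i)" and W: "\<And>m. W m \<in> Vsp (p i)"
    using ball by (simp_all add: arg_ball_def)
  obtain \<sigma> a y w where \<sigma>: "strict_mono \<sigma>" and a: "a \<in> Vsp (n i)" and y: "y \<in> Xbar n (I i)"
    and w: "w \<in> Vsp (p i)" and lim: "(\<lambda>m. nx i (A (\<sigma> m) - a)) \<longlonglongrightarrow> 0"
      "(\<lambda>m. barnorm nx (I i) (Y (\<sigma> m) - y)) \<longlonglongrightarrow> 0" "(\<lambda>m. nu i (W (\<sigma> m) - w)) \<longlonglongrightarrow> 0"
    using arg_ball_convergent_subseq[where A = A and Y = Y and W = W, OF nx nu fin ball] by blast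
  obtain \<delta> where \<delta>: "\<delta> > 0" and near: "\<And>a' y' w'. a' \<in> Vsp (n i) \<Longrightarrow> y' \<in> Xbar n (I i) \<Longrightarrow>
      w' \<in> Vsp (p i) \<Longrightarrow> nx i (a' - a) < \<delta> \<Longrightarrow> barnorm nx (I i) (y' - y) < \<delta> \<Longrightarrow> nu i (w' - w) < \<delta>
      \<Longrightarrow> nx i (g a' y' w' - g a y w) < 1"
    using cont a y w unfolding sub_continuous_def by (metis zero_less_one)
  have "\<forall>\<^sub>F m in sequentially. nx i (A (\<sigma> m) - a) < \<delta> \<and>
      barnorm nx (I i) (Y (\<sigma> m) - y) < \<delta> \<and> nu i (W (\<sigma> m) - w) < \<delta>"
    using lim \<delta> by (auto intro!: eventually_conj order_tendstoD(2))
  moreover have "\<forall>\<^sub>F m in sequentially. nx i (g a y w) + 1 \<le> real m"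
    by (rule eventually_sequentiallyI[of "nat \<lceil>nx i (g a y w) + 1\<rceil>"]) linarith
  ultimately obtain m where m: "nx i (A (\<sigma> m) - a) < \<delta>" "barnorm nx (I i) (Y (\<sigma> m) - y) < \<delta>"
      "nu i (W (\<sigma> m) - w) < \<delta>" "nx i (g a y w) + 1 \<le> real m"
    using eventually_happens'[OF trivial_limit_sequentially eventually_conj] by blast
  have "nx i (g (A (\<sigma> m)) (Y (\<sigma> m)) (W (\<sigma> m))) \<le>
      nx i (g (A (\<sigma> m)) (Y (\<sigma> m)) (W (\<sigma> m)) - g a y w) + nx i (g a y w)"
    by (rule is_norm_on_le_diff[OF nx maps[OF A Y W] maps[OF a y w]])
  also have "\<dots> < real m"
    using near[OF A Y W m(1-3)] m(4) by simp
  also have "\<dots> \<le> real (\<sigma> m)"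
    using seq_suble[OF \<sigma>] by simp
  finally show False
    using big[of "\<sigma> m"] by simp
qed

lemma not_bdd_above_UN_outside_finite:
  fixes A :: "'i \<Rightarrow> 'a::conditionally_complete_linorder set"
  assumes "\<And>i. bdd_above (A i)" and "\<not> bdd_above (\<Union>i. A i)" and "finite F"
  shows "\<exists>i. i \<notin> F \<and> (\<exists>v\<in>A i. c < v)"
proof (rule ccontr)
  assume "\<not> ?thesis"
  then have "(\<Union>i. A i) \<subseteq> (\<Union>i\<in>F. A i) \<union> {..c}"
    by (auto simp: not_less)
  moreover have "bdd_above ((\<Union>i\<in>F. A i) \<union> {..c})"
    using assms(1,3) by simp
  ultimately have "bdd_above (\<Union>i. A i)"
    by (rule bdd_above_mono[rotated])
  with assms(2) show False ..
qed

lemma disjoint_family_selection: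
  fixes D :: "'a \<Rightarrow> 'b set" and Q :: "nat \<Rightarrow> 'a \<Rightarrow> bool"
  assumes fin: "\<And>i. finite (D i)"
    and avail: "\<And>S k. finite S \<Longrightarrow> \<exists>i. D i \<inter> S = {} \<and> Q k i"
  shows "\<exists>s. (\<forall>k. Q k (s k)) \<and> disjoint_family (\<lambda>k. D (s k))"
proof -
  define h where "h S k = (SOME i. D i \<inter> S = {} \<and> Q k i)" for S k
  define U where "U = rec_nat {} (\<lambda>k S. S \<union> D (h S k))"
  have U_0: "U 0 = {}" and U_Suc: "U (Suc k) = U k \<union> D (h (U k) k)" for k
    by (simp_all add: U_def)
  have U_fin: "finite (U k)" for k
    by (induction k) (simp_all add: U_0 U_Suc fin)
  have h_U: "D (h (U k) k) \<inter> U k = {} \<and> Q k (h (U k) k)" for k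
    unfolding h_def using avail[OF U_fin] by (rule someI_ex)
  have U_mono: "U k \<subseteq> U l" if "k \<le> l" for k l
    using lift_Suc_mono_le[of U, OF _ that] U_Suc by blast
  define s where "s k = h (U k) k" for k
  have disj: "D (s k) \<inter> D (s l) = {}" if "k < l" for k l
  proof -
    have "D (s k) \<subseteq> U l"
      using U_Suc[of k] U_mono[of "Suc k" l] that by (auto simp: s_def)
    then show ?thesis using h_U[of l] by (auto simp: s_def)
  qed
  have "disjoint_family (\<lambda>k. D (s k))"
    unfolding disjoint_family_on_def using disj by (metis Int_commute linorder_neqE_nat)
  moreover have "Q k (s k)" for k
    using h_U by (simp add: s_def)
  ultimately show ?thesis by blast
qed

lemma glue_on_disjoint_family:
  assumes "disjoint_family D"
  shows "\<exists>x. \<forall>j. (\<forall>k. j \<in> D k \<longrightarrow> x j = z k j) \<and> ((\<forall>k. j \<notin> D k) \<longrightarrow> x j = c)"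
proof -
  have some_eq: "(SOME k. j \<in> D k) = k" if "j \<in> D k" for j k
    using assms that someI[of "\<lambda>k. j \<in> D k" k] by (auto simp: disjoint_family_on_def)
  show ?thesis
    by (rule exI[of _ "\<lambda>j. if \<exists>k. j \<in> D k then z (SOME k. j \<in> D k) j else c"])
      (auto simp: some_eq)
qed

section \<open>Uniform boundedness in well-posed networks\<close>

locale network =
  fixes n p :: "nat \<Rightarrow> nat" and nx nu :: "nat \<Rightarrow> (nat \<Rightarrow> real) \<Rightarrow> real" and I :: "nat \<Rightarrow> nat set"
    and fs :: "nat \<Rightarrow> (nat \<Rightarrow> real) \<Rightarrow> (nat \<Rightarrow> nat \<Rightarrow> real) \<Rightarrow> (nat \<Rightarrow> real) \<Rightarrow> (nat \<Rightarrow> real)"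
  assumes norm_x: "is_norm_on (n i) (nx i)" and norm_u: "is_norm_on (p i) (nu i)"
    and finite_I: "finite (I i)" and not_in_I: "i \<notin> I i"
    and finite_dependents: "finite {j. i \<in> I j}"
    and maps: "a \<in> Vsp (n i) \<Longrightarrow> y \<in> Xbar n (I i) \<Longrightarrow> w \<in> Vsp (p i) \<Longrightarrow> fs i a y w \<in> Vsp (n i)"
    and cont: "sub_continuous n p nx nu I i (fs i)"
begin

lemma glue_arguments:
  fixes s :: "nat \<Rightarrow> nat"
  assumes disj: "disjoint_family (\<lambda>k. insert (s k) (I (s k)))"
    and ball: "\<And>k. (a k, y k, w k) \<in> arg_ball n p nx nu I (s k) r"
  shows "\<exists>x\<in>seqsp n nx. \<exists>u\<in>seqsp p nu. \<forall>k. netf fs I x u (s k) = fs (s k) (a k) (y k) (w k)"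
proof -
  have a: "a k \<in> Vsp (n (s k)) \<and> nx (s k) (a k) \<le> r" and y: "y k \<in> Xbar n (I (s k))"
    and y_le: "barnorm nx (I (s k)) (y k) \<le> r" and w: "w k \<in> Vsp (p (s k)) \<and> nu (s k) (w k) \<le> r" for k
    using ball[of k] by (simp_all add: arg_ball_def)
  have r: "0 \<le> r" using a[of 0] is_norm_on_nonneg[OF norm_x] by force
  obtain x where x_at: "\<And>k j. j \<in> insert (s k) (I (s k)) \<Longrightarrow> x j = (if j = s k then a k else y k j)"
    and x_out: "\<And>j. (\<forall>k. j \<notin> insert (s k) (I (s k))) \<Longrightarrow> x j = (\<lambda>_. 0)"
    using glue_on_disjoint_family[OF disj, of "\<lambda>k j. if j = s k then a k else y k j" "\<lambda>_. 0"] by blast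
  obtain u where u_at: "\<And>k. u (s k) = w k"
    and u_out: "\<And>j. (\<forall>k. j \<noteq> s k) \<Longrightarrow> u j = (\<lambda>_. 0)"
    using glue_on_disjoint_family[OF disjoint_family_subset[OF disj], of "\<lambda>k. {s k}" "\<lambda>k _. w k" "\<lambda>_. 0"]
    by auto
  have "x j \<in> Vsp (n j) \<and> nx j (x j) \<le> r" for j
  proof (cases "\<exists>k. j \<in> insert (s k) (I (s k))")
    case True
    then obtain k where k: "j \<in> insert (s k) (I (s k))" by blast
    then show ?thesis
      using x_at[OF k] a[of k] y[of k] y_le[of k] barnorm_ge[OF finite_I[of "s k"], of j nx "y k"]
      by (auto simp: Xbar_def)
  next
    case False
    then show ?thesis using x_out is_norm_on_zero[OF norm_x] r by (simp add: Vsp_zero)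
  qed
  then have x: "x \<in> seqsp n nx" unfolding seqsp_def by blast
  have "u j \<in> Vsp (p j) \<and> nu j (u j) \<le> r" for j
    using u_at u_out w is_norm_on_zero[OF norm_u] r by (cases "\<exists>k. j = s k") (auto simp: Vsp_zero)
  then have u: "u \<in> seqsp p nu" unfolding seqsp_def by blast
  have "restr (I (s k)) x = y k" for k
    using x_at[of _ k] not_in_I[of "s k"] y[of k] by (auto simp: restr_def Xbar_def fun_eq_iff)
  moreover have "x (s k) = a k" for k
    using x_at[of "s k" k] by simp
  ultimately have "netf fs I x u (s k) = fs (s k) (a k) (y k) (w k)" for k
    by (simp add: netf_def u_at)
  then show ?thesis using x u by blast
qed

lemma far_subsystem_exceeding:
  assumes unbounded: "\<not> bdd_above (\<Union>i. (\<lambda>(a, y, w). nx i (fs i a y w)) ` arg_ball n p nx nu I i r)"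
    and S: "finite S"
  shows "\<exists>i. insert i (I i) \<inter> S = {} \<and>
    (\<exists>a y w. (a, y, w) \<in> arg_ball n p nx nu I i r \<and> c < nx i (fs i a y w))"
proof -
  have bounded: "bdd_above ((\<lambda>(a, y, w). nx i (fs i a y w)) ` arg_ball n p nx nu I i r)" for i
    by (rule sub_continuous_bounded_on_arg_ball[where g = "fs i", OF norm_x norm_u finite_I maps cont])
  have "finite (S \<union> (\<Union>j\<in>S. {i. j \<in> I i}))"
    using S finite_dependents by auto
  with not_bdd_above_UN_outside_finite[OF bounded unbounded]
  obtain i t where "i \<notin> S \<union> (\<Union>j\<in>S. {i. j \<in> I i})" "t \<in> arg_ball n p nx nu I i r"
    "c < (case t of (a, y, w) \<Rightarrow> nx i (fs i a y w))"
    by blast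
  then show ?thesis by (cases t) auto
qed

lemma uniform_bound_on_arg_ball:
  assumes wp: "well_posed n p nx nu I fs"
  shows "\<exists>B. \<forall>i a y w. (a, y, w) \<in> arg_ball n p nx nu I i r \<longrightarrow> nx i (fs i a y w) \<le> B"
proof -
  have "bdd_above (\<Union>i. (\<lambda>(a, y, w). nx i (fs i a y w)) ` arg_ball n p nx nu I i r)"
  proof (rule ccontr)
    assume unbounded: "\<not> ?thesis"
    have "\<exists>s. (\<forall>k. \<exists>a y w. (a, y, w) \<in> arg_ball n p nx nu I (s k) r \<and> real k < nx (s k) (fs (s k) a y w))
        \<and> disjoint_family (\<lambda>k. insert (s k) (I (s k)))"
    proof (rule disjoint_family_selection)
      show "finite (insert i (I i))" for i using finite_I by simp
    qed (rule far_subsystem_exceeding[OF unbounded])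
    then obtain s where s: "\<And>k. \<exists>a y w. (a, y, w) \<in> arg_ball n p nx nu I (s k) r \<and>
        real k < nx (s k) (fs (s k) a y w)" and disj: "disjoint_family (\<lambda>k. insert (s k) (I (s k)))"
      by blast
    then obtain a y w where ball: "\<And>k. (a k, y k, w k) \<in> arg_ball n p nx nu I (s k) r"
      and big: "\<And>k. real k < nx (s k) (fs (s k) (a k) (y k) (w k))"
      by metis
    obtain x u where "x \<in> seqsp n nx" "u \<in> seqsp p nu"
      and at_s: "\<And>k. netf fs I x u (s k) = fs (s k) (a k) (y k) (w k)"
      using glue_arguments[OF disj ball] by blast
    then have "netf fs I x u \<in> seqsp n nx" using wp by (simp add: well_posed_def)
    then obtain B where B: "\<And>j. nx j (netf fs I x u j) \<le> B" by (auto simp: seqsp_def)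
    define k where "k = nat \<lceil>B\<rceil>"
    have "nx (s k) (fs (s k) (a k) (y k) (w k)) \<le> B"
      using B[of "s k"] at_s[of k] by simp
    then show False
      using big[of k] real_nat_ceiling_ge[of B] unfolding k_def by linarith
  qed
  then obtain B where B: "\<And>v. v \<in> (\<Union>i. (\<lambda>(a, y, w). nx i (fs i a y w)) ` arg_ball n p nx nu I i r) \<Longrightarrow> v \<le> B"
    by (auto simp: bdd_above_def)
  show ?thesis
    by (intro exI[of _ B] allI impI B) force
qed

end

section \<open>K-infinity majorants\<close>

lemma Kinf_mono:
  assumes "Kinf \<kappa>" "0 \<le> r" "r \<le> s"
  shows "\<kappa> r \<le> \<kappa> s"
  using assms strict_mono_on_leD[of "{0..}" \<kappa> r s] by (simp add: Kinf_def)

lemma Kinf_nonneg: "Kinf \<kappa> \<Longrightarrow> 0 \<le> r \<Longrightarrow> 0 \<le> \<kappa> r"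
  using Kinf_mono[of \<kappa> 0 r] by (simp add: Kinf_def)

lemma Kinf_cmult:
  assumes "Kinf \<kappa>" "0 < c"
  shows "Kinf (\<lambda>r. c * \<kappa> r)"
  unfolding Kinf_def
proof (intro conjI allI)
  show "continuous_on {0..} (\<lambda>r. c * \<kappa> r)"
    using assms(1) unfolding Kinf_def by (intro continuous_intros) auto
  show "strict_mono_on {0..} (\<lambda>r. c * \<kappa> r)"
    using assms unfolding Kinf_def by (auto intro!: strict_mono_onI dest: strict_mono_onD)
  show "c * \<kappa> 0 = 0"
    using assms(1) by (simp add: Kinf_def)
  fix M :: real
  obtain r where "r \<ge> 0" "\<kappa> r > M / c"
    using assms(1) unfolding Kinf_def by blast
  then show "\<exists>r\<ge>0. M < c * \<kappa> r"
    using assms(2) by (auto simp: field_simps)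
qed

text \<open>ramp e is the piecewise linear function with ramp e 0 = 0 and slope e j on [j, j + 1].\<close>

definition ramp_sum :: "(nat \<Rightarrow> real) \<Rightarrow> nat \<Rightarrow> real \<Rightarrow> real" where
  "ramp_sum e N r = (\<Sum>j<N. e j * min 1 (max 0 (r - real j)))"

definition ramp :: "(nat \<Rightarrow> real) \<Rightarrow> real \<Rightarrow> real" where
  "ramp e r = ramp_sum e (nat \<lceil>r\<rceil>) r"

lemma ramp_eq_ramp_sum:
  assumes "r \<le> real N"
  shows "ramp e r = ramp_sum e N r"
  unfolding ramp_def ramp_sum_def
  using assms by (intro sum.mono_neutral_left) auto

lemma ramp_0 [simp]: "ramp e 0 = 0"
  by (simp add: ramp_def ramp_sum_def)

lemma ramp_mono:
  assumes "\<And>j. 0 \<le> e j" "r \<le> s"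
  shows "ramp e r \<le> ramp e s"
proof -
  have "ramp_sum e (nat \<lceil>s\<rceil>) r \<le> ramp_sum e (nat \<lceil>s\<rceil>) s"
    unfolding ramp_sum_def using assms by (intro sum_mono mult_left_mono) auto
  then show ?thesis
    using ramp_eq_ramp_sum[of r "nat \<lceil>s\<rceil>"] ramp_eq_ramp_sum[of s "nat \<lceil>s\<rceil>"] assms(2)
      real_nat_ceiling_ge[of s] by simp
qed

lemma sum_le_ramp:
  assumes "\<And>j. 0 \<le> e j" "real k \<le> r"
  shows "(\<Sum>j<k. e j) \<le> ramp e r"
proof -
  define N where "N = max k (nat \<lceil>r\<rceil>)"
  have "(\<Sum>j<k. e j) = (\<Sum>j<k. e j * min 1 (max 0 (r - real j)))"
    using assms(2) by (intro sum.cong) auto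
  also have "\<dots> \<le> ramp_sum e N r"
    unfolding ramp_sum_def N_def using assms(1) by (intro sum_mono2) auto
  also have "\<dots> = ramp e r"
    using ramp_eq_ramp_sum[of r N] real_nat_ceiling_ge[of r] by (simp add: N_def)
  finally show ?thesis .
qed

lemma isCont_ramp: "isCont (ramp e) r"
proof -
  define N where "N = nat \<lceil>r + 1\<rceil>"
  have "\<forall>\<^sub>F s in nhds r. s \<in> {..<r + 1}"
    by (rule eventually_nhds_in_open) auto
  then have "\<forall>\<^sub>F s in nhds r. ramp e s = ramp_sum e N s"
    by eventually_elim (use real_nat_ceiling_ge[of "r + 1"] in \<open>auto simp: N_def intro!: ramp_eq_ramp_sum\<close>)
  moreover have "isCont (ramp_sum e N) r"
    unfolding ramp_sum_def by (intro continuous_intros)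
  ultimately show ?thesis
    using isCont_cong by blast
qed

lemma Kinf_majorant:
  fixes b :: "nat \<Rightarrow> real"
  shows "\<exists>\<kappa>. Kinf \<kappa> \<and> (\<forall>k r. real k \<le> r \<longrightarrow> b k \<le> \<bar>b 0\<bar> + \<kappa> r)"
proof (intro exI conjI allI impI)
  define e where "e j = \<bar>b (Suc j)\<bar>" for j
  have e_nonneg: "0 \<le> e j" for j by (simp add: e_def)
  have ramp_nonneg: "0 \<le> ramp e r" if "0 \<le> r" for r
    using ramp_mono[of e, OF e_nonneg that] by simp
  show "Kinf (\<lambda>r. r + ramp e r)"
    unfolding Kinf_def
  proof (intro conjI allI)
    show "continuous_on {0..} (\<lambda>r. r + ramp e r)"
      by (intro continuous_at_imp_continuous_on ballI continuous_intros isCont_ramp)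
    show "strict_mono_on {0..} (\<lambda>r. r + ramp e r)"
      using ramp_mono[of e, OF e_nonneg] by (intro strict_mono_onI) (simp add: add_less_le_mono)
    show "0 + ramp e 0 = 0" by simp
    show "\<exists>r\<ge>0. M < r + ramp e r" for M
      using ramp_nonneg[of "\<bar>M\<bar> + 1"] by (intro exI[of _ "\<bar>M\<bar> + 1"]) auto
  qed
  fix k r assume kr: "real k \<le> r"
  have "b k \<le> \<bar>b 0\<bar> + (\<Sum>j<k. e j)"
  proof (cases k)
    case (Suc k')
    then have "b k \<le> e k'" by (simp add: e_def)
    moreover have "0 \<le> (\<Sum>j<k'. e j)" using e_nonneg by (simp add: sum_nonneg)
    ultimately show ?thesis using Suc by simp
  qed simp
  also have "\<dots> \<le> \<bar>b 0\<bar> + (r + ramp e r)"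
    using sum_le_ramp[of e, OF e_nonneg kr] kr by simp
  finally show "b k \<le> \<bar>b 0\<bar> + (r + ramp e r)" .
qed

lemma restr_in_Xbar: "x \<in> seqsp n nx \<Longrightarrow> restr I x \<in> Xbar n I"
  by (auto simp: seqsp_def restr_def Xbar_def Vsp_def)

lemma le_supnorm:
  assumes "x \<in> seqsp n nx"
  shows "nx i (x i) \<le> supnorm nx x"
proof -
  obtain B where "\<And>i. nx i (x i) \<le> B"
    using assms by (auto simp: seqsp_def)
  then have "bdd_above (range (\<lambda>i. nx i (x i)))"
    by (rule bdd_aboveI2)
  then show ?thesis
    unfolding supnorm_def by (rule cSUP_upper[OF UNIV_I])
qed

context network
begin

lemma subsystem_bound_if_well_posed:
  assumes "well_posed n p nx nu I fs"
  shows "\<exists>C>0. \<exists>\<kappa>. Kinf \<kappa> \<and>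
    (\<forall>i. \<forall>a\<in>Vsp (n i). \<forall>y\<in>Xbar n (I i). \<forall>w\<in>Vsp (p i).
      nx i (fs i a y w) \<le> C + \<kappa> (nx i a) + \<kappa> (barnorm nx (I i) y) + \<kappa> (nu i w))"
proof -
  have "\<forall>m. \<exists>B. \<forall>i a y w. (a, y, w) \<in> arg_ball n p nx nu I i (real m) \<longrightarrow> nx i (fs i a y w) \<le> B"
    using uniform_bound_on_arg_ball[OF assms] ..
  from choice[OF this] obtain Bd
    where "\<forall>m i a y w. (a, y, w) \<in> arg_ball n p nx nu I i (real m) \<longrightarrow> nx i (fs i a y w) \<le> Bd m"
    by blast
  then have Bd: "\<And>m i a y w. (a, y, w) \<in> arg_ball n p nx nu I i (real m) \<Longrightarrow> nx i (fs i a y w) \<le> Bd m"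
    by blast
  obtain \<kappa> where \<kappa>: "Kinf \<kappa>" and majorant: "\<And>k r. real k \<le> r \<Longrightarrow> Bd (Suc k) \<le> \<bar>Bd 1\<bar> + \<kappa> r"
    using Kinf_majorant[of "\<lambda>k. Bd (Suc k)"] by auto
  have "nx i (fs i a y w) \<le> (\<bar>Bd 1\<bar> + 1) + \<kappa> (nx i a) + \<kappa> (barnorm nx (I i) y) + \<kappa> (nu i w)"
    if a: "a \<in> Vsp (n i)" and y: "y \<in> Xbar n (I i)" and w: "w \<in> Vsp (p i)" for i a y w
  proof -
    have nonneg: "0 \<le> nx i a" "0 \<le> barnorm nx (I i) y" "0 \<le> nu i w"
      using is_norm_on_nonneg[OF norm_x a] barnorm_nonneg[OF finite_I] is_norm_on_nonneg[OF norm_u w] by auto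
    define R where "R = max (nx i a) (max (barnorm nx (I i) y) (nu i w))"
    define k where "k = nat \<lfloor>R\<rfloor>"
    have "R \<le> real (Suc k)" "real k \<le> R"
      using nonneg by (auto simp: k_def R_def) linarith+
    then have "(a, y, w) \<in> arg_ball n p nx nu I i (real (Suc k))"
      using a y w by (auto simp: arg_ball_def R_def)
    then have "nx i (fs i a y w) \<le> Bd (Suc k)"
      by (rule Bd)
    also have "\<dots> \<le> \<bar>Bd 1\<bar> + \<kappa> R"
      using majorant \<open>real k \<le> R\<close> by blast
    also have "\<kappa> R \<le> \<kappa> (nx i a) + \<kappa> (barnorm nx (I i) y) + \<kappa> (nu i w)"
      using Kinf_nonneg[OF \<kappa>] nonneg by (simp add: R_def max_def)
    finally show ?thesis by simp
  qed
  then show ?thesis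
    using \<kappa> by (intro exI[of _ "\<bar>Bd 1\<bar> + 1"] conjI exI[of _ \<kappa>]) auto
qed

lemma netf_in_Vsp:
  assumes x: "x \<in> seqsp n nx" and u: "u \<in> seqsp p nu"
  shows "netf fs I x u i \<in> Vsp (n i)"
  unfolding netf_def using restr_in_Xbar[OF x] x u by (intro maps) (auto simp: seqsp_def)

lemma netf_le_if_subsystem_bound:
  assumes \<kappa>: "Kinf \<kappa>"
    and bound: "\<And>i a y w. a \<in> Vsp (n i) \<Longrightarrow> y \<in> Xbar n (I i) \<Longrightarrow> w \<in> Vsp (p i) \<Longrightarrow>
      nx i (fs i a y w) \<le> C + \<kappa> (nx i a) + \<kappa> (barnorm nx (I i) y) + \<kappa> (nu i w)"
    and x: "x \<in> seqsp n nx" and u: "u \<in> seqsp p nu"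
    and Bx: "\<And>j. nx j (x j) \<le> Bx" and Bu: "\<And>j. nu j (u j) \<le> Bu"
  shows "nx i (netf fs I x u i) \<le> C + 2 * \<kappa> Bx + \<kappa> Bu"
proof -
  have xi: "x i \<in> Vsp (n i)" and ui: "u i \<in> Vsp (p i)"
    using x u by (auto simp: seqsp_def)
  have nonneg: "0 \<le> nx i (x i)" "0 \<le> barnorm nx (I i) (restr (I i) x)" "0 \<le> nu i (u i)"
    using is_norm_on_nonneg[OF norm_x xi] barnorm_nonneg[OF finite_I] is_norm_on_nonneg[OF norm_u ui]
    by auto
  have "0 \<le> Bx"
    using nonneg(1) Bx[of i] by linarith
  then have "barnorm nx (I i) (restr (I i) x) \<le> Bx"
    using finite_I by (intro barnorm_le) (auto simp: restr_def Bx)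
  then have "\<kappa> (nx i (x i)) + \<kappa> (barnorm nx (I i) (restr (I i) x)) + \<kappa> (nu i (u i))
      \<le> 2 * \<kappa> Bx + \<kappa> Bu"
    using Kinf_mono[OF \<kappa> nonneg(1) Bx[of i]] Kinf_mono[OF \<kappa> nonneg(3) Bu[of i]]
      Kinf_mono[OF \<kappa> nonneg(2)] by force
  moreover have "nx i (netf fs I x u i) \<le>
      C + \<kappa> (nx i (x i)) + \<kappa> (barnorm nx (I i) (restr (I i) x)) + \<kappa> (nu i (u i))"
    unfolding netf_def using xi restr_in_Xbar[OF x] ui by (rule bound)
  ultimately show ?thesis by simp
qed

lemma well_posed_if_subsystem_bound:
  assumes "\<exists>C>0. \<exists>\<kappa>. Kinf \<kappa> \<and>
    (\<forall>i. \<forall>a\<in>Vsp (n i). \<forall>y\<in>Xbar n (I i). \<forall>w\<in>Vsp (p i).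
      nx i (fs i a y w) \<le> C + \<kappa> (nx i a) + \<kappa> (barnorm nx (I i) y) + \<kappa> (nu i w))"
  shows "well_posed n p nx nu I fs"
  unfolding well_posed_def
proof (intro ballI)
  from assms obtain C \<kappa> where \<kappa>: "Kinf \<kappa>" and bound: "\<forall>i. \<forall>a\<in>Vsp (n i). \<forall>y\<in>Xbar n (I i).
      \<forall>w\<in>Vsp (p i). nx i (fs i a y w) \<le> C + \<kappa> (nx i a) + \<kappa> (barnorm nx (I i) y) + \<kappa> (nu i w)"
    by blast
  fix x u assume x: "x \<in> seqsp n nx" and u: "u \<in> seqsp p nu"
  then obtain Bx Bu where "\<And>j. nx j (x j) \<le> Bx" "\<And>j. nu j (u j) \<le> Bu"
    by (auto simp: seqsp_def)
  then have "nx i (netf fs I x u i) \<le> C + 2 * \<kappa> Bx + \<kappa> Bu" for i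
    using netf_le_if_subsystem_bound[OF \<kappa> bound[rule_format] x u] by blast
  then show "netf fs I x u \<in> seqsp n nx"
    using netf_in_Vsp[OF x u] unfolding seqsp_def by blast
qed

lemma network_bound_if_subsystem_bound:
  assumes "\<exists>C>0. \<exists>\<kappa>. Kinf \<kappa> \<and>
    (\<forall>i. \<forall>a\<in>Vsp (n i). \<forall>y\<in>Xbar n (I i). \<forall>w\<in>Vsp (p i).
      nx i (fs i a y w) \<le> C + \<kappa> (nx i a) + \<kappa> (barnorm nx (I i) y) + \<kappa> (nu i w))"
  shows "\<exists>C>0. \<exists>\<kappa>. Kinf \<kappa> \<and> (\<forall>x\<in>seqsp n nx. \<forall>u\<in>seqsp p nu.
    supnorm nx (netf fs I x u) \<le> C + \<kappa> (supnorm nx x) + \<kappa> (supnorm nu u))"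
proof -
  from assms obtain C \<kappa> where C: "C > 0" and \<kappa>: "Kinf \<kappa>" and bound: "\<forall>i. \<forall>a\<in>Vsp (n i).
      \<forall>y\<in>Xbar n (I i). \<forall>w\<in>Vsp (p i).
      nx i (fs i a y w) \<le> C + \<kappa> (nx i a) + \<kappa> (barnorm nx (I i) y) + \<kappa> (nu i w)"
    by blast
  have "supnorm nx (netf fs I x u) \<le> C + 2 * \<kappa> (supnorm nx x) + 2 * \<kappa> (supnorm nu u)"
    if x: "x \<in> seqsp n nx" and u: "u \<in> seqsp p nu" for x u
  proof -
    have "0 \<le> nu 0 (u 0)"
      using u is_norm_on_nonneg[OF norm_u] by (simp add: seqsp_def)
    then have "0 \<le> \<kappa> (supnorm nu u)"
      using le_supnorm[OF u, of 0] by (intro Kinf_nonneg[OF \<kappa>]) linarith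
    moreover have "nx i (netf fs I x u i) \<le> C + 2 * \<kappa> (supnorm nx x) + \<kappa> (supnorm nu u)" for i
      using netf_le_if_subsystem_bound[OF \<kappa> bound[rule_format] x u le_supnorm[OF x] le_supnorm[OF u]] .
    then have "supnorm nx (netf fs I x u) \<le> C + 2 * \<kappa> (supnorm nx x) + \<kappa> (supnorm nu u)"
      unfolding supnorm_def[of nx "netf fs I x u"] by (intro cSUP_least) auto
    ultimately show ?thesis by simp
  qed
  then show ?thesis
    using C Kinf_cmult[OF \<kappa>, of 2] by (intro exI[of _ C] conjI exI[of _ "\<lambda>r. 2 * \<kappa> r"]) auto
qed

end

theorem lemma1:
  fixes n p :: "nat \<Rightarrow> nat"
    and nx nu :: "nat \<Rightarrow> (nat \<Rightarrow> real) \<Rightarrow> real"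
    and I :: "nat \<Rightarrow> nat set"
    and fs :: "nat \<Rightarrow> (nat \<Rightarrow> real) \<Rightarrow> (nat \<Rightarrow> nat \<Rightarrow> real) \<Rightarrow> (nat \<Rightarrow> real) \<Rightarrow> (nat \<Rightarrow> real)"
  assumes dims: "\<And>i. n i > 0" "\<And>i. p i > 0"
    and norms: "\<And>i. is_norm_on (n i) (nx i)" "\<And>i. is_norm_on (p i) (nu i)"
    and fin: "\<And>i. finite (I i)"
    and irr: "\<And>i. i \<notin> I i"
    and finrev: "\<And>i. finite {j. i \<in> I j}"
    and maps: "\<And>i a y w. a \<in> Vsp (n i) \<Longrightarrow> y \<in> Xbar n (I i) \<Longrightarrow> w \<in> Vsp (p i)
                 \<Longrightarrow> fs i a y w \<in> Vsp (n i)"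
    and cont: "\<And>i. sub_continuous n p nx nu I i (fs i)"
  shows "(well_posed n p nx nu I fs \<longleftrightarrow>
            (well_posed n p nx nu I fs \<and>
             (\<exists>C>0. \<exists>\<kappa>. Kinf \<kappa> \<and>
                (\<forall>x\<in>seqsp n nx. \<forall>u\<in>seqsp p nu.
                   supnorm nx (netf fs I x u) \<le> C + \<kappa> (supnorm nx x) + \<kappa> (supnorm nu u)))))
       \<and> (well_posed n p nx nu I fs \<longleftrightarrow>
            (\<exists>C>0. \<exists>\<kappa>. Kinf \<kappa> \<and>
               (\<forall>i. \<forall>a\<in>Vsp (n i). \<forall>y\<in>Xbar n (I i). \<forall>w\<in>Vsp (p i).
                  nx i (fs i a y w) \<le> C + \<kappa> (nx i a) + \<kappa> (barnorm nx (I i) y) + \<kappa> (nu i w))))"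
proof -
  interpret network n p nx nu I fs
    by unfold_locales (use norms fin irr finrev maps cont in auto)
  show ?thesis (is "(?wp \<longleftrightarrow> ?wp \<and> ?network_bound) \<and> (?wp \<longleftrightarrow> ?subsystem_bound)")
  proof -
    have "?wp \<Longrightarrow> ?subsystem_bound" by (rule subsystem_bound_if_well_posed)
    moreover have "?subsystem_bound \<Longrightarrow> ?wp" by (rule well_posed_if_subsystem_bound)
    moreover have "?subsystem_bound \<Longrightarrow> ?network_bound" by (rule network_bound_if_subsystem_bound)
    ultimately show ?thesis by argo
  qed
qed

end
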